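(* Let $P$ be a poset on $\{1,\ldots,n\}$ and $k$ a field. The ideal $\mathcal{I}_P$ of the ring $R_P$ is a principal ideal if and only if $P$ satisfies the labelled-$\delta$-chain condition. Furthermore, in this case $\mathcal{I}_P$ is generated by $\mathbf{x}^{\delta}$, i.e. $f_{\min}=\delta$, where $f_{\min}\in\mathcal{A}(P)$ is the element with $f_{\min}+\mathcal{A}^{\mathrm{weak}}(P)=\mathcal{A}(P)$.
   Context: All posets are finite, on labels $\{1,\ldots,n\}$. $\mathcal{A}^{\mathrm{weak}}(P)$ is the set of maps $f:\{1,\ldots,n\}\to\mathbb{N}$ with $f(i)\ge f(j)$ whenever $i<_Pj$; $\mathcal{A}(P)\subseteq\mathcal{A}^{\mathrm{weak}}(P)$ consists of those $f$ with additionally $f(i)>f(j)$ whenever $i<_Pj$ and $i>j$ as integers. $R_P\subseteq k[x_1,\ldots,x_n]$ is the span of $\mathbf{x}^f=\prod_ix_i^{f(i)}$, $f\in\mathcal{A}^{\mathrm{weak}}(P)$, and $\mathcal{I}_P$ is the ideal of $R_P$ spanned by $\mathbf{x}^f$, $f\in\mathcal{A}(P)$; $\mathcal{I}_P$ is principal if and only if there is $f_{\min}\in\mathcal{A}(P)$ with $f_{\min}+\mathcal{A}^{\mathrm{weak}}(P)=\mathcal{A}(P)$. A covering relation $i\lessdot_Pj$ is strict if $i>j$ as integers. $\delta(i)$ is the maximum, over all saturated chains in $P_{\ge i}$ starting at $i$, of the number of strict covering relations in the chain. $P$ satisfies the labelled-$\delta$-chain condition if for every $i$, all saturated chains from $i$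 to a maximal element of $P_{\ge i}$ have the same number $\delta(i)$ of strict covering relations. *)

theory Defs
  imports Main "HOL-Library.Poly_Mapping"
begin

definition is_poset :: "nat \<Rightarrow> (nat \<Rightarrow> nat \<Rightarrow> bool) \<Rightarrow> bool" where
  "is_poset n lt \<longleftrightarrow>
     (\<forall>i j. lt i j \<longrightarrow> i \<in> {1..n} \<and> j \<in> {1..n}) \<and>
     (\<forall>i. \<not> lt i i) \<and>
     (\<forall>i j k. lt i j \<longrightarrow> lt j k \<longrightarrow> lt i k)"

definition A_weak :: "nat \<Rightarrow> (nat \<Rightarrow> nat \<Rightarrow> bool) \<Rightarrow> (nat \<Rightarrow>\<^sub>0 nat) set" where
  "A_weak n lt = {f. Poly_Mapping.keys f \<subseteq> {1..n} \<and>
                     (\<forall>i j. lt i j \<longrightarrow> Poly_Mapping.lookup f i \<ge> Poly_Mapping.lookup f j)}"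

definition A_strict :: "nat \<Rightarrow> (nat \<Rightarrow> nat \<Rightarrow> bool) \<Rightarrow> (nat \<Rightarrow>\<^sub>0 nat) set" where
  "A_strict n lt = {f. f \<in> A_weak n lt \<and>
                     (\<forall>i j. lt i j \<longrightarrow> i > j \<longrightarrow> Poly_Mapping.lookup f i > Poly_Mapping.lookup f j)}"

text \<open>Polynomials over k in the variables x_i: maps from exponent vectors to coefficients.
  The monomial x^f.\<close>
definition xmon :: "(nat \<Rightarrow>\<^sub>0 nat) \<Rightarrow> ((nat \<Rightarrow>\<^sub>0 nat) \<Rightarrow>\<^sub>0 'k::field)" where
  "xmon f = Poly_Mapping.single f 1"

definition R_P :: "nat \<Rightarrow> (nat \<Rightarrow> nat \<Rightarrow> bool) \<Rightarrow> ((nat \<Rightarrow>\<^sub>0 nat) \<Rightarrow>\<^sub>0 'k::field) set" where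
  "R_P n lt = {p. Poly_Mapping.keys p \<subseteq> A_weak n lt}"

definition I_P :: "nat \<Rightarrow> (nat \<Rightarrow> nat \<Rightarrow> bool) \<Rightarrow> ((nat \<Rightarrow>\<^sub>0 nat) \<Rightarrow>\<^sub>0 'k::field) set" where
  "I_P n lt = {p. Poly_Mapping.keys p \<subseteq> A_strict n lt}"

definition principal_in :: "'a::comm_ring_1 set \<Rightarrow> 'a set \<Rightarrow> bool" where
  "principal_in R I \<longleftrightarrow> (\<exists>g\<in>R. I = (\<lambda>r. g * r) ` R)"

definition covers :: "(nat \<Rightarrow> nat \<Rightarrow> bool) \<Rightarrow> nat \<Rightarrow> nat \<Rightarrow> bool" where
  "covers lt i j \<longleftrightarrow> lt i j \<and> \<not> (\<exists>k. lt i k \<and> lt k j)"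

definition sat_chain :: "(nat \<Rightarrow> nat \<Rightarrow> bool) \<Rightarrow> nat list \<Rightarrow> bool" where
  "sat_chain lt c \<longleftrightarrow> c \<noteq> [] \<and>
     (\<forall>k. Suc k < length c \<longrightarrow> covers lt (c ! k) (c ! Suc k))"

definition n_strict :: "nat list \<Rightarrow> nat" where
  "n_strict c = card {k. Suc k < length c \<and> c ! k > c ! Suc k}"

definition delta :: "nat \<Rightarrow> (nat \<Rightarrow> nat \<Rightarrow> bool) \<Rightarrow> nat \<Rightarrow> nat" where
  "delta n lt i = (if i \<in> {1..n}
     then Max {n_strict c | c. sat_chain lt c \<and> hd c = i} else 0)"

definition delta_pm :: "nat \<Rightarrow> (nat \<Rightarrow> nat \<Rightarrow> bool) \<Rightarrow> (nat \<Rightarrow>\<^sub>0 nat)" where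
  "delta_pm n lt = Abs_poly_mapping (delta n lt)"

definition labelled_delta_chain :: "nat \<Rightarrow> (nat \<Rightarrow> nat \<Rightarrow> bool) \<Rightarrow> bool" where
  "labelled_delta_chain n lt \<longleftrightarrow>
     (\<forall>i\<in>{1..n}. \<forall>c. sat_chain lt c \<and> hd c = i \<and> (\<forall>j. \<not> lt (last c) j)
        \<longrightarrow> n_strict c = delta n lt i)"

end

theory Submission
  imports Defs
begin

text \<open>
  The exponent vector delta is the least element of A(P): it is itself a strict labelling, and
  every strict labelling drops along a saturated chain by at least the number of strict covers.
  So A(P) is contained in delta + A_weak(P) iff f - delta is weakly order reversing for every
  f in A(P). Under the labelled-delta-chain condition delta drops by exactly [b < a] along every
  covering relation of a by b, which gives this. If instead delta a > delta b + [b < a] for some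
  cover, maximising over the chains from x the number of strict covers plus a bonus of one for
  passing through b yields an f in A(P) with f a <= delta a but f b > delta b.

  On the ring side, multiplication by x^d shifts exponents by d, so I_P = x^d R_P iff
  A(P) = d + A_weak(P); and a generator of I_P divides x^delta, so comparing leading monomials
  shows that it is a monomial, necessarily x^delta.
\<close>

lemma lookup_single_one_mult_add:
  "Poly_Mapping.lookup (Poly_Mapping.single d (1::'b::semiring_1) * r) (d + k)
    = Poly_Mapping.lookup r (k::'a::cancel_comm_monoid_add)"
  by (simp add: lookup_mult lookup_single when_mult)

lemma keys_single_one_mult:
  "Poly_Mapping.keys (Poly_Mapping.single d (1::'b::semiring_1) * r)
    = (+) (d::'a::cancel_comm_monoid_add) ` Poly_Mapping.keys r"
proof
  show "Poly_Mapping.keys (Poly_Mapping.single d 1 * r) \<subseteq> (+) d ` Poly_Mapping.keys r"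
    using keys_mult[of "Poly_Mapping.single d 1" r] by auto
  show "(+) d ` Poly_Mapping.keys r \<subseteq> Poly_Mapping.keys (Poly_Mapping.single d 1 * r)"
    by (auto simp: in_keys_iff lookup_single_one_mult_add)
qed

lemma single_one_mult_image:
  "(\<lambda>r. Poly_Mapping.single d (1::'b::semiring_1) * r) ` {r. Poly_Mapping.keys r \<subseteq> W}
    = {p. Poly_Mapping.keys p \<subseteq> (+) (d::'a::cancel_comm_monoid_add) ` W}"
proof (intro equalityI subsetI)
  fix p :: "'a \<Rightarrow>\<^sub>0 'b"
  assume "p \<in> {p. Poly_Mapping.keys p \<subseteq> (+) d ` W}"
  then have p: "Poly_Mapping.keys p \<subseteq> (+) d ` W" by simp
  define r where "r = Abs_poly_mapping (\<lambda>k. Poly_Mapping.lookup p (d + k))"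
  have "finite ((+) d -` Poly_Mapping.keys p)"
    by (rule finite_vimageI) (auto simp: inj_on_def)
  then have lookup_r: "Poly_Mapping.lookup r k = Poly_Mapping.lookup p (d + k)" for k
    by (simp add: r_def in_keys_iff vimage_def)
  have "p = Poly_Mapping.single d 1 * r"
  proof (rule poly_mapping_eqI)
    fix m
    show "Poly_Mapping.lookup p m = Poly_Mapping.lookup (Poly_Mapping.single d 1 * r) m"
    proof (cases "m \<in> range ((+) d)")
      case True
      then show ?thesis by (auto simp: lookup_single_one_mult_add lookup_r)
    next
      case False
      then have "m \<notin> Poly_Mapping.keys p" "m \<notin> Poly_Mapping.keys (Poly_Mapping.single d 1 * r)"
        using p by (auto simp: keys_single_one_mult)
      then show ?thesis by (simp add: in_keys_iff)
    qed
  qed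
  moreover have "Poly_Mapping.keys r \<subseteq> W"
    using p by (auto simp: in_keys_iff lookup_r)
  ultimately show "p \<in> (\<lambda>r. Poly_Mapping.single d 1 * r) ` {r. Poly_Mapping.keys r \<subseteq> W}"
    by blast
qed (auto simp: keys_single_one_mult intro!: imageI)

lemma lookup_mult_Max_keys:
  fixes p q :: "'a::{ordered_cancel_comm_monoid_add, linorder} \<Rightarrow>\<^sub>0 'b::semiring_0"
  assumes "p \<noteq> 0" and "q \<noteq> 0"
  shows "Poly_Mapping.lookup (p * q) (Max (Poly_Mapping.keys p) + Max (Poly_Mapping.keys q))
    = Poly_Mapping.lookup p (Max (Poly_Mapping.keys p)) * Poly_Mapping.lookup q (Max (Poly_Mapping.keys q))"
proof -
  define a b where "a = Max (Poly_Mapping.keys p)" and "b = Max (Poly_Mapping.keys q)"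
  have le_a: "Poly_Mapping.lookup p l \<noteq> 0 \<Longrightarrow> l \<le> a" for l
    by (simp add: a_def in_keys_iff[symmetric])
  have le_b: "Poly_Mapping.lookup q m \<noteq> 0 \<Longrightarrow> m \<le> b" for m
    by (simp add: b_def in_keys_iff[symmetric])
  have "Poly_Mapping.lookup p l * (\<Sum>m. Poly_Mapping.lookup q m when a + b = l + m)
      = (Poly_Mapping.lookup p a * Poly_Mapping.lookup q b when l = a)" for l
  proof (cases "l = a")
    case False
    have "(Poly_Mapping.lookup q m when a + b = l + m) = 0" if "Poly_Mapping.lookup p l \<noteq> 0" for m
    proof -
      have "l < a" using le_a[OF that] False by simp
      then have "l + m < a + b" if "Poly_Mapping.lookup q m \<noteq> 0"
        using le_b[OF that] by (rule add_less_le_mono)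
      then show ?thesis by (simp add: when_def) (metis less_irrefl)
    qed
    then show ?thesis using False by (cases "Poly_Mapping.lookup p l = 0") auto
  qed simp
  then show ?thesis by (simp add: lookup_mult a_def b_def)
qed

lemma less_eq_poly_mapping_if_lookup_le:
  fixes p q :: "'a::wellorder \<Rightarrow>\<^sub>0 'b::{zero, linorder}"
  assumes "\<And>i. Poly_Mapping.lookup p i \<le> Poly_Mapping.lookup q i"
  shows "p \<le> q"
  using assms
proof transfer
  fix f g :: "'a \<Rightarrow> 'b"
  assume le: "\<And>i. f i \<le> g i"
  show "less_fun f g \<or> f = g"
  proof (cases "f = g")
    case False
    then obtain k0 where k0: "f k0 \<noteq> g k0" by auto
    define k where "k = (LEAST k. f k \<noteq> g k)"
    have "f k \<noteq> g k" unfolding k_def by (rule LeastI[of _ k0]) (rule k0)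
    then have "f k < g k" using le[of k] by simp
    moreover have "\<forall>k'<k. f k' = g k'" unfolding k_def using not_less_Least by blast
    ultimately show ?thesis unfolding less_fun_def by blast
  qed simp
qed

lemma principal_span_generator_keys:
  fixes g :: "'a::{ordered_cancel_comm_monoid_add, linorder} \<Rightarrow>\<^sub>0 'b::{semiring_1, semiring_no_zero_divisors}"
  assumes span: "{p. Poly_Mapping.keys p \<subseteq> S} = (\<lambda>r. g * r) ` {r. Poly_Mapping.keys r \<subseteq> W}"
    and "0 \<in> W" and W_nonneg: "\<And>w. w \<in> W \<Longrightarrow> 0 \<le> w"
    and "d \<in> S" and S_ge: "\<And>s. s \<in> S \<Longrightarrow> d \<le> s"
  shows "Poly_Mapping.keys g \<subseteq> {d}"
proof -
  have "g \<in> {p. Poly_Mapping.keys p \<subseteq> S}"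
    unfolding span using \<open>0 \<in> W\<close> by (auto intro!: image_eqI[of _ _ 1])
  then have keys_g: "Poly_Mapping.keys g \<subseteq> S" by simp
  have "Poly_Mapping.single d 1 \<in> (\<lambda>r. g * r) ` {r. Poly_Mapping.keys r \<subseteq> W}"
    unfolding span[symmetric] using \<open>d \<in> S\<close> by simp
  then obtain r where r: "Poly_Mapping.keys r \<subseteq> W" and d_gr: "Poly_Mapping.single d 1 = g * r"
    by blast
  have "g * r \<noteq> 0"
    unfolding d_gr[symmetric] by (metis lookup_single_eq lookup_zero one_neq_zero)
  then have "g \<noteq> 0" "r \<noteq> 0" by auto
  define a b where "a = Max (Poly_Mapping.keys g)" and "b = Max (Poly_Mapping.keys r)"
  have a: "a \<in> Poly_Mapping.keys g" and b: "b \<in> Poly_Mapping.keys r"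
    using \<open>g \<noteq> 0\<close> \<open>r \<noteq> 0\<close> by (auto simp: a_def b_def)
  then have "a + b \<in> Poly_Mapping.keys (g * r)"
    using lookup_mult_Max_keys[OF \<open>g \<noteq> 0\<close> \<open>r \<noteq> 0\<close>] by (simp add: a_def b_def in_keys_iff)
  then have "a + b = d" by (simp add: d_gr[symmetric])
  have "a = d"
  proof (rule ccontr)
    assume "a \<noteq> d"
    then have "d < a" using S_ge a keys_g by (simp add: order_neq_le_trans subsetD)
    then have "d + 0 < a + b" using W_nonneg b r by (intro add_less_le_mono) auto
    then show False using \<open>a + b = d\<close> by simp
  qed
  show ?thesis
  proof
    fix s assume "s \<in> Poly_Mapping.keys g"
    then have "s \<le> d" "d \<le> s" using S_ge keys_g \<open>a = d\<close> by (auto simp: a_def)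
    then show "s \<in> {d}" by simp
  qed
qed

lemma principal_span_subset_shift:
  fixes g :: "'a::{ordered_cancel_comm_monoid_add, linorder} \<Rightarrow>\<^sub>0 'b::{semiring_1, semiring_no_zero_divisors}"
  assumes span: "{p. Poly_Mapping.keys p \<subseteq> S} = (\<lambda>r. g * r) ` {r. Poly_Mapping.keys r \<subseteq> W}"
    and "0 \<in> W" and "\<And>w. w \<in> W \<Longrightarrow> 0 \<le> w"
    and "d \<in> S" and "\<And>s. s \<in> S \<Longrightarrow> d \<le> s"
  shows "S \<subseteq> (+) d ` W"
proof
  fix s assume "s \<in> S"
  then have "Poly_Mapping.single s 1 \<in> (\<lambda>r. g * r) ` {r. Poly_Mapping.keys r \<subseteq> W}"
    unfolding span[symmetric] by simp
  then obtain r where r: "Poly_Mapping.keys r \<subseteq> W" "Poly_Mapping.single s 1 = g * r"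
    by blast
  have "s \<in> Poly_Mapping.keys (g * r)" by (simp add: r(2)[symmetric])
  then obtain x y where "s = x + y" "x \<in> Poly_Mapping.keys g" "y \<in> Poly_Mapping.keys r"
    using keys_mult[of g r] by blast
  then show "s \<in> (+) d ` W"
    using principal_span_generator_keys[OF assms] r(1) by auto
qed

lemma sat_chain_singleton [simp]: "sat_chain lt [x]"
  by (simp add: sat_chain_def)

lemma sat_chain_Cons_Cons [simp]:
  "sat_chain lt (x # y # c) \<longleftrightarrow> covers lt x y \<and> sat_chain lt (y # c)"
  by (auto simp: sat_chain_def All_less_Suc2)

lemma n_strict_singleton [simp]: "n_strict [x] = 0"
  by (simp add: n_strict_def)

lemma n_strict_Cons_Cons [simp]:
  "n_strict (x # y # c) = of_bool (y < x) + n_strict (y # c)"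
proof -
  let ?S = "\<lambda>c. {k. Suc k < length c \<and> c ! Suc k < c ! k}"
  have split: "?S (x # y # c) = {k. k = 0 \<and> y < x} \<union> Suc ` ?S (y # c)"
  proof (rule set_eqI)
    show "k \<in> ?S (x # y # c) \<longleftrightarrow> k \<in> {k. k = 0 \<and> y < x} \<union> Suc ` ?S (y # c)" for k
      by (cases k) auto
  qed
  have "finite (?S (y # c))"
    by (rule finite_subset[of _ "{..<length (y # c)}"]) auto
  then show ?thesis
    unfolding n_strict_def split by (subst card_Un_disjoint) (auto simp: card_image)
qed

definition strict_labelling :: "(nat \<Rightarrow> nat \<Rightarrow> bool) \<Rightarrow> (nat \<Rightarrow> nat) \<Rightarrow> bool" where
  "strict_labelling lt g \<longleftrightarrow> (\<forall>x y. lt x y \<longrightarrow> g y + of_bool (y < x) \<le> g x)"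

lemma A_strict_iff:
  "f \<in> A_strict n lt \<longleftrightarrow>
     Poly_Mapping.keys f \<subseteq> {1..n} \<and> strict_labelling lt (Poly_Mapping.lookup f)"
proof -
  have "a + of_bool (j < i) \<le> b \<longleftrightarrow> a \<le> b \<and> (j < i \<longrightarrow> a < b)" for a b :: nat and i j :: nat
    by (cases "j < i") auto
  then show ?thesis
    unfolding A_strict_def A_weak_def strict_labelling_def by blast
qed

lemma strict_labelling_chain:
  assumes "strict_labelling lt g" and "sat_chain lt c"
  shows "g (last c) + n_strict c \<le> g (hd c)"
  using assms(2)
proof (induction c rule: induct_list012)
  case (3 x y c)
  then have "g y + of_bool (y < x) \<le> g x"
    using assms(1) by (auto simp: strict_labelling_def covers_def)
  with 3 show ?case by simp
qed (auto simp: sat_chain_def)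

lemma lookup_Abs_poly_mapping_ground:
  fixes n :: nat
  assumes "\<forall>x. x \<notin> {1..n} \<longrightarrow> g x = 0"
  shows "Poly_Mapping.lookup (Abs_poly_mapping g) = g"
proof -
  have "{x. g x \<noteq> 0} \<subseteq> {1..n}"
    using assms by auto
  then have "finite {x. g x \<noteq> 0}"
    by (rule finite_subset) simp
  then show ?thesis by simp
qed

lemma Abs_poly_mapping_in_A_strict:
  assumes "strict_labelling lt g" and "\<forall>x. x \<notin> {1..n} \<longrightarrow> g x = 0"
  shows "Abs_poly_mapping g \<in> A_strict n lt"
proof -
  have "{x. g x \<noteq> 0} \<subseteq> {1..n}"
    using assms(2) by auto
  then show ?thesis
    using assms by (auto simp: A_strict_iff in_keys_iff lookup_Abs_poly_mapping_ground)
qed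

locale finite_poset =
  fixes n :: nat and lt :: "nat \<Rightarrow> nat \<Rightarrow> bool"
  assumes is_poset: "is_poset n lt"
begin

lemma lt_ground: "lt i j \<Longrightarrow> i \<in> {1..n} \<and> j \<in> {1..n}"
  using is_poset unfolding is_poset_def by blast

lemma lt_irrefl: "\<not> lt i i"
  using is_poset unfolding is_poset_def by blast

lemma lt_trans: "lt i j \<Longrightarrow> lt j k \<Longrightarrow> lt i k"
  using is_poset unfolding is_poset_def by blast

lemma finite_above: "finite {z. lt x z}"
  by (rule finite_subset[of _ "{1..n}"]) (auto dest: lt_ground)

lemma lt_induct_covers [consumes 1, case_names covers trans]:
  assumes "lt x y"
    and covers: "\<And>a b. covers lt a b \<Longrightarrow> P a b"
    and trans: "\<And>a b c. P a b \<Longrightarrow> P b c \<Longrightarrow> P a c"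
  shows "P x y"
  using assms(1)
proof (induction "card {z. lt x z \<and> lt z y}" arbitrary: x y rule: less_induct)
  case less
  show ?case
  proof (cases "covers lt x y")
    case True
    then show ?thesis by (rule covers)
  next
    case False
    then obtain z where z: "lt x z" "lt z y"
      using less.prems by (auto simp: covers_def)
    have finite: "finite {w. lt x w \<and> lt w y}"
      using finite_above by (rule rev_finite_subset) auto
    have "{w. lt x w \<and> lt w z} \<subset> {w. lt x w \<and> lt w y}"
      and "{w. lt z w \<and> lt w y} \<subset> {w. lt x w \<and> lt w y}"
      using z lt_trans lt_irrefl by blast+
    then have "P x z" and "P z y"
      using less.hyps z psubset_card_mono[OF finite] by blast+
    then show ?thesis by (rule trans)
  qed
qed

lemma exists_cover_above: "lt x j \<Longrightarrow> \<exists>y. covers lt x y"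
  by (induction rule: lt_induct_covers) auto

lemma sat_chain_hd_lt: "sat_chain lt (x # c) \<Longrightarrow> z \<in> set c \<Longrightarrow> lt x z"
proof (induction c arbitrary: x)
  case (Cons y c)
  then show ?case
    by (cases c) (auto simp: covers_def intro: lt_trans)
qed simp

lemma sat_chain_distinct: "sat_chain lt c \<Longrightarrow> distinct c"
proof (induction c rule: induct_list012)
  case (3 x y c)
  then show ?case
    using sat_chain_hd_lt[of x "y # c" x] lt_irrefl by auto
qed simp_all

lemma finite_sat_chains: "finite {c. sat_chain lt c \<and> hd c = x}"
proof (rule finite_subset)
  let ?X = "insert x {1..n}"
  show "{c. sat_chain lt c \<and> hd c = x} \<subseteq> {c. set c \<subseteq> ?X \<and> length c \<le> card ?X}"
  proof clarify
    fix c assume c: "sat_chain lt c" "x = hd c"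
    then obtain c' where c': "c = x # c'"
      by (cases c) (auto simp: sat_chain_def)
    have "set c' \<subseteq> {1..n}"
      using c(1) sat_chain_hd_lt[of x c'] lt_ground unfolding c' by blast
    then have "set c \<subseteq> ?X"
      using c' by auto
    moreover have "length c \<le> card ?X"
      using card_mono[OF _ \<open>set c \<subseteq> ?X\<close>] sat_chain_distinct[OF c(1)]
      by (simp add: distinct_card)
    ultimately show "set c \<subseteq> insert (hd c) {1..n} \<and> length c \<le> card (insert (hd c) {1..n})"
      using c by simp
  qed
  show "finite {c. set c \<subseteq> ?X \<and> length c \<le> card ?X}"
    by (rule finite_lists_length_le) simp
qed

lemma sat_chain_to_maximal: "\<exists>c. sat_chain lt c \<and> hd c = x \<and> (\<forall>j. \<not> lt (last c) j)"
proof (induction "card {z. lt x z}" arbitrary: x rule: less_induct)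
  case less
  show ?case
  proof (cases "\<exists>j. lt x j")
    case False
    then show ?thesis by (intro exI[of _ "[x]"]) auto
  next
    case True
    then obtain y where y: "covers lt x y"
      using exists_cover_above by blast
    have "{z. lt y z} \<subset> {z. lt x z}"
      using y lt_trans lt_irrefl by (auto simp: covers_def)
    then obtain c where c: "sat_chain lt c" "hd c = y" "\<forall>j. \<not> lt (last c) j"
      using less.hyps psubset_card_mono[OF finite_above] by blast
    then obtain c' where "c = y # c'"
      by (cases c) (auto simp: sat_chain_def)
    then show ?thesis
      using c y by (intro exI[of _ "x # c"]) auto
  qed
qed

lemma strict_labelling_covers:
  assumes "\<And>a b. covers lt a b \<Longrightarrow> g b + of_bool (b < a) \<le> g a"
  shows "strict_labelling lt g"
  unfolding strict_labelling_def
proof (intro allI impI)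
  fix x y assume "lt x y"
  then show "g y + of_bool (y < x) \<le> g x"
  proof (induction rule: lt_induct_covers)
    case (covers a b)
    then show ?case by (rule assms)
  next
    case (trans a b c)
    \<comment> \<open>\<open>c < a\<close> forces \<open>c < b\<close> or \<open>b < a\<close>\<close>
    then show ?case by (cases "c < a"; cases "c < b"; cases "b < a") auto
  qed
qed

definition chain_max :: "(nat list \<Rightarrow> nat) \<Rightarrow> nat \<Rightarrow> nat" where
  "chain_max \<beta> x = (if x \<in> {1..n}
     then Max ((\<lambda>c. n_strict c + \<beta> c) ` {c. sat_chain lt c \<and> hd c = x}) else 0)"

lemma chain_max_ge:
  "x \<in> {1..n} \<Longrightarrow> sat_chain lt c \<Longrightarrow> hd c = x \<Longrightarrow> n_strict c + \<beta> c \<le> chain_max \<beta> x"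
  unfolding chain_max_def using finite_sat_chains by (auto intro!: Max_ge)

lemma chain_max_attained:
  assumes "x \<in> {1..n}"
  obtains c where "sat_chain lt c" "hd c = x" "chain_max \<beta> x = n_strict c + \<beta> c"
proof -
  have "{c. sat_chain lt c \<and> hd c = x} \<noteq> {}"
    using sat_chain_singleton by fastforce
  then have "chain_max \<beta> x \<in> (\<lambda>c. n_strict c + \<beta> c) ` {c. sat_chain lt c \<and> hd c = x}"
    unfolding chain_max_def using assms finite_sat_chains by (auto intro!: Max_in)
  then show thesis using that by blast
qed

lemma chain_max_cover:
  assumes mono: "\<And>x c. \<beta> c \<le> \<beta> (x # c)" and cover: "covers lt x y"
  shows "chain_max \<beta> y + of_bool (y < x) \<le> chain_max \<beta> x"
proof -
  have x: "x \<in> {1..n}" and y: "y \<in> {1..n}"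
    using cover lt_ground by (auto simp: covers_def)
  obtain c where c: "sat_chain lt c" "hd c = y" "chain_max \<beta> y = n_strict c + \<beta> c"
    using chain_max_attained[OF y] .
  then obtain c' where c': "c = y # c'"
    by (cases c) (auto simp: sat_chain_def)
  have "n_strict (x # c) + \<beta> (x # c) \<le> chain_max \<beta> x"
    using c c' cover by (intro chain_max_ge[OF x]) auto
  then show ?thesis
    using c c' mono[of c x] by simp
qed

lemma chain_max_strict_labelling:
  "(\<And>x c. \<beta> c \<le> \<beta> (x # c)) \<Longrightarrow> strict_labelling lt (chain_max \<beta>)"
  by (intro strict_labelling_covers chain_max_cover)

lemma delta_eq_chain_max: "delta n lt = chain_max (\<lambda>_. 0)"
  unfolding delta_def chain_max_def by (simp add: fun_eq_iff setcompr_eq_image)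

lemma delta_ge:
  "x \<in> {1..n} \<Longrightarrow> sat_chain lt c \<Longrightarrow> hd c = x \<Longrightarrow> n_strict c \<le> delta n lt x"
  using chain_max_ge[of x c "\<lambda>_. 0"] by (simp add: delta_eq_chain_max)

lemma delta_attained:
  assumes "x \<in> {1..n}"
  obtains c where "sat_chain lt c" "hd c = x" "delta n lt x = n_strict c"
  using chain_max_attained[OF assms, of "\<lambda>_. 0"] that by (auto simp: delta_eq_chain_max)

lemma delta_strict_labelling: "strict_labelling lt (delta n lt)"
  unfolding delta_eq_chain_max by (rule chain_max_strict_labelling) simp

lemma delta_le_strict_labelling:
  assumes "strict_labelling lt g"
  shows "delta n lt x \<le> g x"
proof (cases "x \<in> {1..n}")
  case True
  then obtain c where "sat_chain lt c" "hd c = x" "delta n lt x = n_strict c"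
    by (rule delta_attained)
  then show ?thesis
    using strict_labelling_chain[OF assms] by fastforce
qed (auto simp: delta_def)

lemma delta_maximal:
  assumes "\<forall>j. \<not> lt m j"
  shows "delta n lt m = 0"
proof (cases "m \<in> {1..n}")
  case True
  then obtain c where c: "sat_chain lt c" "hd c = m" "delta n lt m = n_strict c"
    by (rule delta_attained)
  then have "c = [m]"
    using assms by (cases c rule: remdups_adj.cases) (auto simp: sat_chain_def covers_def)
  then show ?thesis using c by simp
qed (auto simp: delta_def)

lemma delta_cover_le: "covers lt a b \<Longrightarrow> delta n lt b + of_bool (b < a) \<le> delta n lt a"
  using delta_strict_labelling by (simp add: strict_labelling_def covers_def)

lemma delta_along_chain:
  assumes covers: "\<forall>a b. covers lt a b \<longrightarrow> delta n lt a = delta n lt b + of_bool (b < a)"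
    and "sat_chain lt c"
  shows "delta n lt (hd c) = delta n lt (last c) + n_strict c"
  using assms(2)
proof (induction c rule: induct_list012)
  case (3 x y c)
  then have "covers lt x y" and "sat_chain lt (y # c)" by simp_all
  then have "delta n lt x = delta n lt y + of_bool (y < x)"
    and "delta n lt y = delta n lt (last (y # c)) + n_strict (y # c)"
    using covers "3.IH"(2) by simp_all
  then show ?case by simp
qed (auto simp: sat_chain_def)

lemma labelled_delta_chain_iff_covers:
  "labelled_delta_chain n lt \<longleftrightarrow>
     (\<forall>a b. covers lt a b \<longrightarrow> delta n lt a = delta n lt b + of_bool (b < a))"
proof
  assume "labelled_delta_chain n lt"
  then have maximal_chain: "n_strict c = delta n lt i"
    if "i \<in> {1..n}" "sat_chain lt c" "hd c = i" "\<forall>j. \<not> lt (last c) j" for i c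
    using that unfolding labelled_delta_chain_def by blast
  show "\<forall>a b. covers lt a b \<longrightarrow> delta n lt a = delta n lt b + of_bool (b < a)"
  proof (intro allI impI)
    fix a b assume cover: "covers lt a b"
    then have a: "a \<in> {1..n}" and b: "b \<in> {1..n}"
      using lt_ground by (auto simp: covers_def)
    obtain c where c: "sat_chain lt c" "hd c = b" "\<forall>j. \<not> lt (last c) j"
      using sat_chain_to_maximal by blast
    then obtain c' where c': "c = b # c'"
      by (cases c) (auto simp: sat_chain_def)
    have "n_strict c = delta n lt b"
      using c by (intro maximal_chain[OF b])
    moreover have "n_strict (a # c) = delta n lt a"
      using c cover unfolding c' by (intro maximal_chain[OF a]) auto
    ultimately show "delta n lt a = delta n lt b + of_bool (b < a)"
      using c' by simp
  qed
next
  assume covers: "\<forall>a b. covers lt a b \<longrightarrow> delta n lt a = delta n lt b + of_bool (b < a)"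
  show "labelled_delta_chain n lt"
    unfolding labelled_delta_chain_def
  proof (intro ballI allI impI)
    fix i c assume "sat_chain lt c \<and> hd c = i \<and> (\<forall>j. \<not> lt (last c) j)"
    then show "n_strict c = delta n lt i"
      using delta_along_chain[OF covers, of c] delta_maximal[of "last c"] by simp
  qed
qed

lemma sat_chain_through_cover:
  assumes "covers lt a b" and "sat_chain lt (a # c)" and "b \<in> set c"
  shows "hd c = b"
proof -
  obtain y c' where c: "c = y # c'"
    using assms(3) by (cases c) auto
  have "covers lt a y" and tail: "sat_chain lt (y # c')"
    using assms(2) unfolding c by auto
  then have "\<not> lt y b"
    using assms(1) by (auto simp: covers_def)
  then show ?thesis
    using assms(3) sat_chain_hd_lt[OF tail] c by auto
qed

lemma delta_less_chain_max_visit: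
  assumes b: "b \<in> {1..n}"
  shows "delta n lt b < chain_max (\<lambda>c. of_bool (b \<in> set c)) b"
proof -
  obtain c where c: "sat_chain lt c" "hd c = b" "delta n lt b = n_strict c"
    using delta_attained[OF b] .
  then have "b \<in> set c"
    by (cases c) (auto simp: sat_chain_def)
  then show ?thesis
    using chain_max_ge[OF b c(1,2), of "\<lambda>c. of_bool (b \<in> set c)"] c(3) by simp
qed

lemma chain_max_visit_le_delta:
  assumes cover: "covers lt a b" and gap: "delta n lt b + of_bool (b < a) < delta n lt a"
  shows "chain_max (\<lambda>c. of_bool (b \<in> set c)) a \<le> delta n lt a"
proof -
  have a: "a \<in> {1..n}" and b: "b \<in> {1..n}"
    using cover lt_ground by (auto simp: covers_def)
  obtain c where c: "sat_chain lt c" "hd c = a"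
    and max: "chain_max (\<lambda>c. of_bool (b \<in> set c)) a = n_strict c + of_bool (b \<in> set c)"
    using chain_max_attained[OF a] .
  show ?thesis
  proof (cases "b \<in> set c")
    case False
    then show ?thesis using max delta_ge[OF a c] by simp
  next
    case True
    obtain c' where c': "c = a # c'"
      using c by (cases c) (auto simp: sat_chain_def)
    have "b \<noteq> a" using cover lt_irrefl by (auto simp: covers_def)
    then have "b \<in> set c'" using True c' by simp
    moreover have "sat_chain lt (a # c')"
      using c c' by simp
    ultimately have "hd c' = b"
      using sat_chain_through_cover[OF cover] by blast
    then obtain c'' where c'': "c' = b # c''"
      using \<open>b \<in> set c'\<close> by (cases c') auto
    then have "n_strict (b # c'') \<le> delta n lt b"
      using c c' by (intro delta_ge[OF b]) auto
    then show ?thesis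
      using max gap True unfolding c' c'' by simp
  qed
qed

lemma strict_labelling_exceeding_delta:
  assumes cover: "covers lt a b" and gap: "delta n lt b + of_bool (b < a) < delta n lt a"
  obtains g where "strict_labelling lt g" "\<forall>x. x \<notin> {1..n} \<longrightarrow> g x = 0"
    and "g a \<le> delta n lt a" and "delta n lt b < g b"
proof
  define g where "g = chain_max (\<lambda>c. of_bool (b \<in> set c))"
  show "strict_labelling lt g"
    unfolding g_def by (rule chain_max_strict_labelling) auto
  show "\<forall>x. x \<notin> {1..n} \<longrightarrow> g x = 0"
    by (auto simp: g_def chain_max_def)
  show "g a \<le> delta n lt a"
    unfolding g_def using cover gap by (rule chain_max_visit_le_delta)
  show "delta n lt b < g b"
    unfolding g_def using cover lt_ground by (intro delta_less_chain_max_visit) (auto simp: covers_def)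
qed

lemma delta_outside_ground: "\<forall>x. x \<notin> {1..n} \<longrightarrow> delta n lt x = 0"
  by (simp add: delta_def)

lemma lookup_delta_pm [simp]: "Poly_Mapping.lookup (delta_pm n lt) = delta n lt"
  unfolding delta_pm_def using delta_outside_ground by (rule lookup_Abs_poly_mapping_ground)

lemma delta_pm_in_A_strict: "delta_pm n lt \<in> A_strict n lt"
  unfolding delta_pm_def
  using delta_strict_labelling delta_outside_ground by (rule Abs_poly_mapping_in_A_strict)

lemma delta_pm_plus_A_weak: "(+) (delta_pm n lt) ` A_weak n lt \<subseteq> A_strict n lt"
proof clarify
  fix w assume w: "w \<in> A_weak n lt"
  have "Poly_Mapping.keys (delta_pm n lt + w) \<subseteq> {1..n}"
    using keys_add[of "delta_pm n lt" w] delta_pm_in_A_strict w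
    by (auto simp: A_strict_def A_weak_def)
  moreover have "strict_labelling lt (Poly_Mapping.lookup (delta_pm n lt + w))"
    unfolding strict_labelling_def
  proof (intro allI impI)
    fix x y assume "lt x y"
    then have "delta n lt y + of_bool (y < x) \<le> delta n lt x"
      using delta_strict_labelling by (simp add: strict_labelling_def)
    moreover have "Poly_Mapping.lookup w y \<le> Poly_Mapping.lookup w x"
      using w \<open>lt x y\<close> by (simp add: A_weak_def)
    ultimately show "Poly_Mapping.lookup (delta_pm n lt + w) y + of_bool (y < x)
        \<le> Poly_Mapping.lookup (delta_pm n lt + w) x"
      by (simp add: lookup_add)
  qed
  ultimately show "delta_pm n lt + w \<in> A_strict n lt"
    by (simp add: A_strict_iff)
qed

lemma labelled_delta_chain_if_A_strict_subset_shift: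
  assumes shift: "A_strict n lt \<subseteq> (+) (delta_pm n lt) ` A_weak n lt"
  shows "labelled_delta_chain n lt"
  unfolding labelled_delta_chain_iff_covers
proof (intro allI impI, rule ccontr)
  fix a b assume cover: "covers lt a b" and "delta n lt a \<noteq> delta n lt b + of_bool (b < a)"
  with delta_cover_le have gap: "delta n lt b + of_bool (b < a) < delta n lt a"
    by (simp add: order_less_le)
  obtain g where g: "strict_labelling lt g" "\<forall>x. x \<notin> {1..n} \<longrightarrow> g x = 0"
    and ga: "g a \<le> delta n lt a" and gb: "delta n lt b < g b"
    using strict_labelling_exceeding_delta[OF cover gap] .
  have "Abs_poly_mapping g \<in> (+) (delta_pm n lt) ` A_weak n lt"
    using shift Abs_poly_mapping_in_A_strict[OF g] by (rule subsetD)
  then obtain w where g_eq: "Abs_poly_mapping g = delta_pm n lt + w" and w: "w \<in> A_weak n lt"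
    by (rule imageE)
  have g_split: "g x = delta n lt x + Poly_Mapping.lookup w x" for x
    using arg_cong[OF g_eq, of "\<lambda>p. Poly_Mapping.lookup p x"] g(2)
    by (simp add: lookup_Abs_poly_mapping_ground lookup_add)
  have "Poly_Mapping.lookup w b \<le> Poly_Mapping.lookup w a"
    using w cover by (simp add: A_weak_def covers_def)
  then show False
    using ga gb g_split[of a] g_split[of b] by linarith
qed

lemma A_strict_subset_shift_if_labelled_delta_chain:
  assumes chains: "labelled_delta_chain n lt"
  shows "A_strict n lt \<subseteq> (+) (delta_pm n lt) ` A_weak n lt"
proof
  fix f assume f: "f \<in> A_strict n lt"
  then have keys_f: "Poly_Mapping.keys f \<subseteq> {1..n}"
    and labelling_f: "strict_labelling lt (Poly_Mapping.lookup f)"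
    by (simp_all add: A_strict_iff)
  have delta_le: "delta n lt x \<le> Poly_Mapping.lookup f x" for x
    by (rule delta_le_strict_labelling[OF labelling_f])
  have "f = delta_pm n lt + (f - delta_pm n lt)"
    by (rule poly_mapping_eqI) (simp add: lookup_add lookup_minus delta_le)
  moreover have "f - delta_pm n lt \<in> A_weak n lt"
    unfolding A_weak_def
  proof (intro CollectI conjI allI impI)
    show "Poly_Mapping.keys (f - delta_pm n lt) \<subseteq> {1..n}"
      using keys_f by (auto simp: in_keys_iff lookup_minus)
    fix x y assume "lt x y"
    then show "Poly_Mapping.lookup (f - delta_pm n lt) y \<le> Poly_Mapping.lookup (f - delta_pm n lt) x"
    proof (induction rule: lt_induct_covers)
      case (covers a b)
      then have "delta n lt a = delta n lt b + of_bool (b < a)"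
        using chains by (simp add: labelled_delta_chain_iff_covers)
      moreover have "Poly_Mapping.lookup f b + of_bool (b < a) \<le> Poly_Mapping.lookup f a"
        using labelling_f covers by (simp add: strict_labelling_def covers_def)
      ultimately show ?case using delta_le[of b] by (simp add: lookup_minus)
    qed (rule order_trans)
  qed
  ultimately show "f \<in> (+) (delta_pm n lt) ` A_weak n lt"
    by (rule image_eqI)
qed

lemma delta_pm_le_A_strict: "f \<in> A_strict n lt \<Longrightarrow> delta_pm n lt \<le> f"
  by (rule less_eq_poly_mapping_if_lookup_le) (simp add: A_strict_iff delta_le_strict_labelling)

end

theorem proposition9p5:
  fixes n :: nat and lt :: "nat \<Rightarrow> nat \<Rightarrow> bool"
  assumes "is_poset n lt"
  shows "(principal_in (R_P n lt :: ((nat \<Rightarrow>\<^sub>0 nat) \<Rightarrow>\<^sub>0 'k::field) set) (I_P n lt)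
           \<longleftrightarrow> labelled_delta_chain n lt)
       \<and> (labelled_delta_chain n lt \<longrightarrow>
           (I_P n lt :: ((nat \<Rightarrow>\<^sub>0 nat) \<Rightarrow>\<^sub>0 'k::field) set)
             = (\<lambda>r. xmon (delta_pm n lt) * r) ` R_P n lt
           \<and> delta_pm n lt \<in> A_strict n lt
           \<and> (\<lambda>g. delta_pm n lt + g) ` A_weak n lt = A_strict n lt)"
proof -
  interpret finite_poset n lt by (rule finite_poset.intro) (rule assms)
  let ?d = "delta_pm n lt"
  let ?R = "R_P n lt :: ((nat \<Rightarrow>\<^sub>0 nat) \<Rightarrow>\<^sub>0 'k) set"
  have shift_iff: "(+) ?d ` A_weak n lt = A_strict n lt \<longleftrightarrow> labelled_delta_chain n lt"
    using labelled_delta_chain_if_A_strict_subset_shift A_strict_subset_shift_if_labelled_delta_chain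
      delta_pm_plus_A_weak by blast
  have generated: "I_P n lt = (\<lambda>r. xmon ?d * r) ` ?R" if "labelled_delta_chain n lt"
    using that shift_iff unfolding I_P_def R_P_def xmon_def single_one_mult_image by simp
  have "xmon ?d \<in> ?R"
    using delta_pm_in_A_strict by (auto simp: R_P_def xmon_def A_strict_def)
  then have "principal_in ?R (I_P n lt)" if "labelled_delta_chain n lt"
    unfolding principal_in_def using generated[OF that] by blast
  moreover have "labelled_delta_chain n lt" if principal: "principal_in ?R (I_P n lt)"
  proof -
    obtain g where "I_P n lt = (\<lambda>r. g * r) ` ?R"
      using principal unfolding principal_in_def by blast
    then have "A_strict n lt \<subseteq> (+) ?d ` A_weak n lt"
      unfolding I_P_def R_P_def
      by (rule principal_span_subset_shift)
        (auto simp: A_weak_def less_eq_poly_mapping_if_lookup_le delta_pm_in_A_strict delta_pm_le_A_strict)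
    then show ?thesis by (rule labelled_delta_chain_if_A_strict_subset_shift)
  qed
  ultimately show ?thesis
    using generated shift_iff delta_pm_in_A_strict by blast
qed

end
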